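(* A policy profile $\pi^*\in\Pi$ is a Nash policy if and only if $\langle v(\pi^* ),\pi-\pi^*\rangle\le0$ for all $\pi\in\Pi$.
   Context: Standing setting. Finite $N$-player stochastic game with random stopping: players $\mathcal N$, finite states $\mathcal S$, finite action sets $\mathcal A_i$, $\mathcal A=\prod_i\mathcal A_i$, rewards $r_i:\mathcal S\times\mathcal A\to[-1,1]$, nonnegative transition weights $P(s'\mid s,a)$ with stopping probability $\zeta_{s,a}=1-\sum_{s'}P(s'\mid s,a)\ge\zeta>0$, initial distribution $\rho$. Policies $\pi_i\in\Pi_i=\Delta(\mathcal A_i)^{\mathcal S}$, $\Pi=\prod_i\Pi_i$. Episodes: $s_0\sim\rho$; players independently draw $a_{i,t}\sim\pi_i(\cdot\mid s_t)$; stop w.p. $\zeta_{s_t,a_t}$ (time $T(\tau)$), else move to $s'$ w.p. $P(s'\mid s_t,a_t)$. $V_{i,\rho}(\pi)=\mathbb E_\pi[\sum_{t=0}^{T(\tau)}r_i(s_t,a_t)]$, $v_i(\pi)=\nabla_{\pi_i}V_{i,\rho}(\pi)$, $v=(v_i)_i$. A Nash policy satisfies $V_{i,\rho}(\pi^* )\ge V_{i,\rho}(\pi_i;\pi^*_{-i})$ for all $i$ and $\pi_i\in\Pi_i$. Standing assumption: the mismatch coefficient $M=\max_{\pi,\pi'}\|\tilde d^\pi_\rho/\tilde d^{\pi'}_\rho\|_\infty$ is finite, where $\tilde d^\pi_\rho(s)=\mathbb E_\pi[\sum_{t=0}^{T(\tau)}\mathbf 1\{s_t=s\}]$. *)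

theory Defs
  imports "HOL-Analysis.Analysis"
begin

(* Players 'n, states 's, action universe 'a (all finite types).
   Player i's action set is A i (a nonempty subset of 'a).
   A policy profile is pol :: 'n \<Rightarrow> 's \<Rightarrow> 'a \<Rightarrow> real,  pol i s a = pi_i(a|s). *)

type_synonym ('n,'s,'a) profile = "'n \<Rightarrow> 's \<Rightarrow> 'a \<Rightarrow> real"

definition joint_actions :: "('n \<Rightarrow> 'a set) \<Rightarrow> ('n \<Rightarrow> 'a) set" where
  "joint_actions A = PiE UNIV A"

definition policy_set_i :: "('n \<Rightarrow> 'a set) \<Rightarrow> 'n \<Rightarrow> ('s \<Rightarrow> 'a \<Rightarrow> real) set" where
  "policy_set_i A i = {p. \<forall>s. (\<forall>a. a \<notin> A i \<longrightarrow> p s a = 0) \<and>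
                              (\<forall>a\<in>A i. 0 \<le> p s a) \<and> (\<Sum>a\<in>A i. p s a) = 1}"

definition policy_set :: "('n \<Rightarrow> 'a set) \<Rightarrow> ('n,'s,'a) profile set" where
  "policy_set A = {pol. \<forall>i. pol i \<in> policy_set_i A i}"

definition joint_prob :: "('n::finite,'s,'a) profile \<Rightarrow> 's \<Rightarrow> ('n \<Rightarrow> 'a) \<Rightarrow> real" where
  "joint_prob pol s a = (\<Prod>i\<in>UNIV. pol i s (a i))"

(* occ t s = Pr(episode not yet stopped at time t and s_t = s) *)
fun occ :: "('n::finite \<Rightarrow> 'a set) \<Rightarrow> ('s::finite \<Rightarrow> ('n \<Rightarrow> 'a) \<Rightarrow> 's \<Rightarrow> real) \<Rightarrow> ('s \<Rightarrow> real)
            \<Rightarrow> ('n,'s,'a) profile \<Rightarrow> nat \<Rightarrow> 's \<Rightarrow> real" where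
  "occ A P \<rho> pol 0 s = \<rho> s"
| "occ A P \<rho> pol (Suc t) s' =
     (\<Sum>s\<in>UNIV. occ A P \<rho> pol t s * (\<Sum>a\<in>joint_actions A. joint_prob pol s a * P s a s'))"

(* V_{i,rho}(pol) = E_pi[ sum_{t=0}^{T} r_i(s_t,a_t) ] *)
definition value_fn :: "('n::finite \<Rightarrow> 'a set) \<Rightarrow> ('s::finite \<Rightarrow> ('n \<Rightarrow> 'a) \<Rightarrow> 's \<Rightarrow> real) \<Rightarrow> ('s \<Rightarrow> real)
            \<Rightarrow> ('n \<Rightarrow> 's \<Rightarrow> ('n \<Rightarrow> 'a) \<Rightarrow> real) \<Rightarrow> 'n \<Rightarrow> ('n,'s,'a) profile \<Rightarrow> real" where
  "value_fn A P \<rho> r i pol =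
     (\<Sum>t. \<Sum>s\<in>UNIV. occ A P \<rho> pol t s * (\<Sum>a\<in>joint_actions A. joint_prob pol s a * r i s a))"

definition visitation :: "('n::finite \<Rightarrow> 'a set) \<Rightarrow> ('s::finite \<Rightarrow> ('n \<Rightarrow> 'a) \<Rightarrow> 's \<Rightarrow> real) \<Rightarrow> ('s \<Rightarrow> real)
            \<Rightarrow> ('n,'s,'a) profile \<Rightarrow> 's \<Rightarrow> real" where
  "visitation A P \<rho> pol s = (\<Sum>t. occ A P \<rho> pol t s)"

definition grad_i :: "('n::finite \<Rightarrow> 'a set) \<Rightarrow> ('s::finite \<Rightarrow> ('n \<Rightarrow> 'a) \<Rightarrow> 's \<Rightarrow> real) \<Rightarrow> ('s \<Rightarrow> real)
            \<Rightarrow> ('n \<Rightarrow> 's \<Rightarrow> ('n \<Rightarrow> 'a) \<Rightarrow> real) \<Rightarrow> ('n,'s,'a) profile \<Rightarrow> 'n \<Rightarrow> 's \<Rightarrow> 'a \<Rightarrow> real" where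
  "grad_i A P \<rho> r pol i s a =
     deriv (\<lambda>x. value_fn A P \<rho> r i (pol(i := (pol i)(s := (pol i s)(a := x))))) (pol i s a)"

definition grad_inner :: "('n::finite \<Rightarrow> 'a set) \<Rightarrow> ('s::finite \<Rightarrow> ('n \<Rightarrow> 'a) \<Rightarrow> 's \<Rightarrow> real) \<Rightarrow> ('s \<Rightarrow> real)
            \<Rightarrow> ('n \<Rightarrow> 's \<Rightarrow> ('n \<Rightarrow> 'a) \<Rightarrow> real) \<Rightarrow> ('n,'s,'a) profile \<Rightarrow> ('n,'s,'a) profile \<Rightarrow> real" where
  "grad_inner A P \<rho> r pis pol =
     (\<Sum>i\<in>UNIV. \<Sum>s\<in>UNIV. \<Sum>a\<in>A i. grad_i A P \<rho> r pis i s a * (pol i s a - pis i s a))"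

definition is_nash :: "('n::finite \<Rightarrow> 'a set) \<Rightarrow> ('s::finite \<Rightarrow> ('n \<Rightarrow> 'a) \<Rightarrow> 's \<Rightarrow> real) \<Rightarrow> ('s \<Rightarrow> real)
            \<Rightarrow> ('n \<Rightarrow> 's \<Rightarrow> ('n \<Rightarrow> 'a) \<Rightarrow> real) \<Rightarrow> ('n,'s,'a) profile \<Rightarrow> bool" where
  "is_nash A P \<rho> r pis \<longleftrightarrow> pis \<in> policy_set A \<and>
     (\<forall>i. \<forall>p\<in>policy_set_i A i. value_fn A P \<rho> r i (pis(i := p)) \<le> value_fn A P \<rho> r i pis)"

end

theory Submission
  imports Defs
begin

text \<open>
  Every joint action stops the episode with probability at least \<open>\<zeta>\<close>, so the state-to-state
  kernel K of every profile has row sums at most \<open>1 - \<zeta>\<close>: occupancy measures, the visitation d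
  and the state values W = R + K W are geometric series, and \<open>V\<^sub>i = \<Sum>\<^sub>s d(s) R(s)\<close>.
  Moving player i's policy by y in a direction q changes K and R affinely in y, and the
  performance-difference identity gives \<open>V\<^sub>i(\<pi>\<^sub>y) - V\<^sub>i(\<pi>) = y \<Sum>\<^sub>s d\<^sub>y(s) \<Sum>\<^sub>a q(s,a) Q\<^sub>i(s,a)\<close>,
  where \<open>Q\<^sub>i\<close> is player i's action value at \<open>\<pi>\<close> and \<open>d\<^sub>y\<close> the visitation of \<open>\<pi>\<^sub>y\<close>.
  Since \<open>d\<^sub>y \<rightarrow> d\<^sub>0\<close>, the gradient is \<open>v\<^sub>i(\<pi>)(s,a) = d(s) Q\<^sub>i(s,a)\<close>.

  At a Nash policy no player gains by moving towards another policy, so every directional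
  derivative \<open>\<langle>v(\<pi>\<^sup>*), \<pi> - \<pi>\<^sup>*\<rangle>\<close> is nonpositive. Conversely, deviations at a single state
  show \<open>d(s) \<Sum>\<^sub>a (\<pi>\<^sub>i - \<pi>\<^sup>*\<^sub>i)(a|s) Q\<^sub>i(s,a) \<le> 0\<close> for every s; a finite mismatch coefficient
  keeps every deviation away from the states that \<open>\<pi>\<^sup>*\<close> never visits, and the identity with
  y = 1 shows that no deviation is profitable.
\<close>

lemma sum_eq_single_term:
  assumes "finite S" and "a \<in> S" and "\<And>x. x \<in> S \<Longrightarrow> x \<noteq> a \<Longrightarrow> f x = 0"
  shows "sum f S = f a"
  using assms by (simp add: sum.remove[OF assms(1,2)] sum.neutral)

lemma DERIV_nonpos_if_right_max:
  fixes f :: "real \<Rightarrow> real"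
  assumes "DERIV f x :> D" and "0 < e" and "\<And>h. 0 < h \<Longrightarrow> h \<le> e \<Longrightarrow> f (x + h) \<le> f x"
  shows "D \<le> 0"
proof (rule ccontr)
  assume "\<not> D \<le> 0"
  then obtain d where "0 < d" and inc: "\<And>h. 0 < h \<Longrightarrow> h < d \<Longrightarrow> f x < f (x + h)"
    using DERIV_pos_inc_right[OF assms(1)] by force
  then show False
    using inc[of "min d e / 2"] assms(3)[of "min d e / 2"] \<open>0 < d\<close> assms(2) by linarith
qed

section \<open>Contracting kernels\<close>

text \<open>Absolute values because the perturbed kernels \<open>K + y E\<close> used for differentiation may have
  negative entries.\<close>

definition contracting_kernel :: "('s::finite \<Rightarrow> 's \<Rightarrow> real) \<Rightarrow> real \<Rightarrow> bool" where
  "contracting_kernel K c \<longleftrightarrow> 0 \<le> c \<and> c < 1 \<and> (\<forall>s. (\<Sum>s'\<in>UNIV. \<bar>K s s'\<bar>) \<le> c)"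

fun occupancy :: "('s::finite \<Rightarrow> 's \<Rightarrow> real) \<Rightarrow> ('s \<Rightarrow> real) \<Rightarrow> nat \<Rightarrow> 's \<Rightarrow> real" where
  "occupancy K \<rho> 0 s = \<rho> s"
| "occupancy K \<rho> (Suc t) s' = (\<Sum>s\<in>UNIV. occupancy K \<rho> t s * K s s')"

definition visits :: "('s::finite \<Rightarrow> 's \<Rightarrow> real) \<Rightarrow> ('s \<Rightarrow> real) \<Rightarrow> 's \<Rightarrow> real" where
  "visits K \<rho> s = (\<Sum>t. occupancy K \<rho> t s)"

fun reward_at :: "('s::finite \<Rightarrow> 's \<Rightarrow> real) \<Rightarrow> ('s \<Rightarrow> real) \<Rightarrow> nat \<Rightarrow> 's \<Rightarrow> real" where
  "reward_at K R 0 s = R s"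
| "reward_at K R (Suc t) s = (\<Sum>s'\<in>UNIV. K s s' * reward_at K R t s')"

definition state_value :: "('s::finite \<Rightarrow> 's \<Rightarrow> real) \<Rightarrow> ('s \<Rightarrow> real) \<Rightarrow> 's \<Rightarrow> real" where
  "state_value K R s = (\<Sum>t. reward_at K R t s)"

lemma l1_norm_kernel_mult_le:
  fixes K :: "'s::finite \<Rightarrow> 's \<Rightarrow> real"
  assumes "\<And>s. (\<Sum>s'\<in>UNIV. \<bar>K s s'\<bar>) \<le> c"
  shows "(\<Sum>s'\<in>UNIV. \<bar>\<Sum>s\<in>UNIV. e s * K s s'\<bar>) \<le> c * (\<Sum>s\<in>UNIV. \<bar>e s\<bar>)"
proof -
  have "(\<Sum>s'\<in>UNIV. \<bar>\<Sum>s\<in>UNIV. e s * K s s'\<bar>) \<le> (\<Sum>s'\<in>UNIV. \<Sum>s\<in>UNIV. \<bar>e s\<bar> * \<bar>K s s'\<bar>)"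
    by (intro sum_mono) (metis (no_types, lifting) abs_mult sum.cong sum_abs)
  also have "\<dots> = (\<Sum>s\<in>UNIV. \<bar>e s\<bar> * (\<Sum>s'\<in>UNIV. \<bar>K s s'\<bar>))"
    by (subst sum.swap) (simp add: sum_distrib_left)
  also have "\<dots> \<le> (\<Sum>s\<in>UNIV. \<bar>e s\<bar> * c)"
    using assms by (intro sum_mono mult_left_mono) auto
  finally show ?thesis
    by (simp add: sum_distrib_left mult.commute)
qed

lemma abs_kernel_mult_le:
  fixes K :: "'s::finite \<Rightarrow> 's \<Rightarrow> real"
  assumes "contracting_kernel K c" and "\<And>s. \<bar>v s\<bar> \<le> B"
  shows "\<bar>\<Sum>s'\<in>UNIV. K s s' * v s'\<bar> \<le> c * B"
proof -
  have "0 \<le> B"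
    using assms(2) abs_ge_zero order_trans by blast
  have "\<bar>\<Sum>s'\<in>UNIV. K s s' * v s'\<bar> \<le> (\<Sum>s'\<in>UNIV. \<bar>K s s'\<bar> * B)"
    by (rule order_trans[OF sum_abs], rule sum_mono) (simp add: abs_mult mult_left_mono assms(2))
  also have "\<dots> = (\<Sum>s'\<in>UNIV. \<bar>K s s'\<bar>) * B"
    by (simp add: sum_distrib_right)
  also have "\<dots> \<le> c * B"
    using assms(1) \<open>0 \<le> B\<close> unfolding contracting_kernel_def by (intro mult_right_mono) auto
  finally show ?thesis .
qed

lemma occupancy_l1_le:
  assumes "contracting_kernel K c"
  shows "(\<Sum>s\<in>UNIV. \<bar>occupancy K \<rho> t s\<bar>) \<le> c ^ t * (\<Sum>s\<in>UNIV. \<bar>\<rho> s\<bar>)"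
proof (induction t)
  case (Suc t)
  have "(\<Sum>s\<in>UNIV. \<bar>occupancy K \<rho> (Suc t) s\<bar>) \<le> c * (\<Sum>s\<in>UNIV. \<bar>occupancy K \<rho> t s\<bar>)"
    using assms by (simp add: l1_norm_kernel_mult_le contracting_kernel_def)
  also have "\<dots> \<le> c ^ Suc t * (\<Sum>s\<in>UNIV. \<bar>\<rho> s\<bar>)"
    using Suc.IH assms by (simp add: contracting_kernel_def mult_left_mono mult.assoc)
  finally show ?case .
qed simp

lemma reward_at_abs_le:
  assumes "contracting_kernel K c"
  shows "\<bar>reward_at K R t s\<bar> \<le> c ^ t * (\<Sum>s\<in>UNIV. \<bar>R s\<bar>)"
proof (induction t arbitrary: s)
  case 0
  show ?case using member_le_sum[of s UNIV "\<lambda>s. \<bar>R s\<bar>"] by simp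
next
  case (Suc t)
  then show ?case
    using abs_kernel_mult_le[OF assms] by (simp add: mult.assoc)
qed

lemma summable_geometric_bound:
  fixes c :: real
  assumes "\<bar>c\<bar> < 1" and "\<And>t. \<bar>f t\<bar> \<le> c ^ t * B"
  shows "summable f"
proof (rule summable_comparison_test)
  show "summable (\<lambda>t. c ^ t * B)"
    using assms(1) by (intro summable_mult2 summable_geometric) simp
qed (use assms(2) in simp)

lemma contracting_kernel_abs_less_one: "contracting_kernel K c \<Longrightarrow> \<bar>c\<bar> < 1"
  by (simp add: contracting_kernel_def)

lemma summable_occupancy:
  assumes "contracting_kernel K c"
  shows "summable (\<lambda>t. occupancy K \<rho> t s)"
proof (rule summable_geometric_bound[OF contracting_kernel_abs_less_one[OF assms]])
  show "\<bar>occupancy K \<rho> t s\<bar> \<le> c ^ t * (\<Sum>s\<in>UNIV. \<bar>\<rho> s\<bar>)" for t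
    using member_le_sum[of s UNIV "\<lambda>s. \<bar>occupancy K \<rho> t s\<bar>"] occupancy_l1_le[OF assms, of \<rho> t]
    by simp
qed

lemma summable_reward_at:
  assumes "contracting_kernel K c"
  shows "summable (\<lambda>t. reward_at K R t s)"
  using contracting_kernel_abs_less_one[OF assms] reward_at_abs_le[OF assms]
  by (rule summable_geometric_bound)

lemma visits_fixpoint:
  assumes "contracting_kernel K c"
  shows "visits K \<rho> s' = \<rho> s' + (\<Sum>s\<in>UNIV. visits K \<rho> s * K s s')"
proof -
  note summable = summable_occupancy[OF assms]
  have "(\<Sum>t. occupancy K \<rho> (Suc t) s') = visits K \<rho> s' - \<rho> s'"
    using suminf_split_head[OF summable] by (simp add: visits_def)
  moreover have "(\<Sum>t. occupancy K \<rho> (Suc t) s') = (\<Sum>s\<in>UNIV. visits K \<rho> s * K s s')"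
    by (simp add: visits_def suminf_sum summable_mult2[OF summable] suminf_mult2[OF summable])
  ultimately show ?thesis
    by simp
qed

lemma visits_nonneg:
  assumes "contracting_kernel K c" and "\<And>s s'. 0 \<le> K s s'" and "\<And>s. 0 \<le> \<rho> s"
  shows "0 \<le> visits K \<rho> s"
proof -
  have "0 \<le> occupancy K \<rho> t s" for t
    using assms(2,3) by (induction t arbitrary: s) (auto intro!: sum_nonneg)
  then show ?thesis
    unfolding visits_def by (intro suminf_nonneg summable_occupancy[OF assms(1)])
qed

lemma state_value_fixpoint:
  assumes "contracting_kernel K c"
  shows "state_value K R s = R s + (\<Sum>s'\<in>UNIV. K s s' * state_value K R s')"
proof -
  note summable = summable_reward_at[OF assms]
  have "(\<Sum>t. reward_at K R (Suc t) s) = state_value K R s - R s"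
    using suminf_split_head[OF summable] by (simp add: state_value_def)
  moreover have "(\<Sum>t. reward_at K R (Suc t) s) = (\<Sum>s'\<in>UNIV. K s s' * state_value K R s')"
  proof -
    have "(\<Sum>t. reward_at K R (Suc t) s) = (\<Sum>s'\<in>UNIV. \<Sum>t. K s s' * reward_at K R t s')"
      using suminf_sum[of UNIV "\<lambda>s' t. K s s' * reward_at K R t s'"] summable_mult[OF summable]
      by simp
    also have "\<dots> = (\<Sum>s'\<in>UNIV. K s s' * state_value K R s')"
      unfolding state_value_def by (intro sum.cong refl suminf_mult summable)
    finally show ?thesis .
  qed
  ultimately show ?thesis
    by simp
qed

lemma l1_le_of_fixpoint:
  assumes "contracting_kernel K c" and "\<And>s'. e s' = g s' + (\<Sum>s\<in>UNIV. e s * K s s')"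
  shows "(1 - c) * (\<Sum>s\<in>UNIV. \<bar>e s\<bar>) \<le> (\<Sum>s\<in>UNIV. \<bar>g s\<bar>)"
proof -
  have "(\<Sum>s\<in>UNIV. \<bar>e s\<bar>) \<le> (\<Sum>s'\<in>UNIV. \<bar>g s'\<bar> + \<bar>\<Sum>s\<in>UNIV. e s * K s s'\<bar>)"
    by (intro sum_mono) (subst assms(2), rule abs_triangle_ineq)
  also have "\<dots> \<le> (\<Sum>s\<in>UNIV. \<bar>g s\<bar>) + c * (\<Sum>s\<in>UNIV. \<bar>e s\<bar>)"
    using assms(1) l1_norm_kernel_mult_le[of K c e] by (simp add: sum.distrib contracting_kernel_def)
  finally show ?thesis
    by (simp add: algebra_simps)
qed

text \<open>The performance-difference identity, for an arbitrary \<open>W\<close>.\<close>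

lemma sum_visits_bellman_residual:
  assumes "contracting_kernel K c"
  shows "(\<Sum>s\<in>UNIV. visits K \<rho> s * (R s + (\<Sum>s'\<in>UNIV. K s s' * W s') - W s))
         = (\<Sum>s\<in>UNIV. visits K \<rho> s * R s) - (\<Sum>s\<in>UNIV. \<rho> s * W s)"
proof -
  have inflow: "(\<Sum>s\<in>UNIV. visits K \<rho> s * K s s') = visits K \<rho> s' - \<rho> s'" for s'
    using visits_fixpoint[OF assms, of \<rho> s'] by simp
  have "(\<Sum>s\<in>UNIV. visits K \<rho> s * (\<Sum>s'\<in>UNIV. K s s' * W s'))
        = (\<Sum>s'\<in>UNIV. (\<Sum>s\<in>UNIV. visits K \<rho> s * K s s') * W s')"
    unfolding sum_distrib_left sum_distrib_right mult.assoc by (rule sum.swap)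
  also have "\<dots> = (\<Sum>s\<in>UNIV. visits K \<rho> s * W s) - (\<Sum>s\<in>UNIV. \<rho> s * W s)"
    unfolding inflow left_diff_distrib by (rule sum_subtractf)
  moreover have "(\<Sum>s\<in>UNIV. visits K \<rho> s * (R s + (\<Sum>s'\<in>UNIV. K s s' * W s') - W s))
      = (\<Sum>s\<in>UNIV. visits K \<rho> s * R s) + (\<Sum>s\<in>UNIV. visits K \<rho> s * (\<Sum>s'\<in>UNIV. K s s' * W s'))
        - (\<Sum>s\<in>UNIV. visits K \<rho> s * W s)"
    by (simp add: distrib_left right_diff_distrib sum.distrib sum_subtractf)
  ultimately show ?thesis
    by linarith
qed

lemma sum_visits_difference:
  assumes K0: "contracting_kernel K0 c" and K1: "contracting_kernel K1 c'"
  shows "(\<Sum>s\<in>UNIV. visits K1 \<rho> s * R1 s) - (\<Sum>s\<in>UNIV. visits K0 \<rho> s * R0 s)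
       = (\<Sum>s\<in>UNIV. visits K1 \<rho> s *
            (R1 s - R0 s + (\<Sum>s'\<in>UNIV. (K1 s s' - K0 s s') * state_value K0 R0 s')))"
proof -
  let ?W = "state_value K0 R0"
  have residual0: "R0 s + (\<Sum>s'\<in>UNIV. K0 s s' * ?W s') - ?W s = 0" for s
    using state_value_fixpoint[OF K0, of R0 s] by linarith
  have residual1: "R1 s + (\<Sum>s'\<in>UNIV. K1 s s' * ?W s') - ?W s
      = R1 s - R0 s + (\<Sum>s'\<in>UNIV. (K1 s s' - K0 s s') * ?W s')" for s
    using residual0[of s] by (simp add: left_diff_distrib sum_subtractf)
  have "(\<Sum>s\<in>UNIV. visits K0 \<rho> s * R0 s) = (\<Sum>s\<in>UNIV. \<rho> s * ?W s)"
    using sum_visits_bellman_residual[OF K0, of \<rho> R0 ?W] unfolding residual0 by simp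
  then show ?thesis
    using sum_visits_bellman_residual[OF K1, of \<rho> R1 ?W] unfolding residual1 by linarith
qed

lemma visits_difference_l1_le:
  assumes K0: "contracting_kernel K0 c" and K1: "contracting_kernel K1 c'"
  shows "(1 - c) * (\<Sum>s\<in>UNIV. \<bar>visits K1 \<rho> s - visits K0 \<rho> s\<bar>)
         \<le> (\<Sum>s'\<in>UNIV. \<bar>\<Sum>s\<in>UNIV. visits K1 \<rho> s * (K1 s s' - K0 s s')\<bar>)"
proof (rule l1_le_of_fixpoint[OF K0])
  fix s'
  show "visits K1 \<rho> s' - visits K0 \<rho> s' = (\<Sum>s\<in>UNIV. visits K1 \<rho> s * (K1 s s' - K0 s s'))
      + (\<Sum>s\<in>UNIV. (visits K1 \<rho> s - visits K0 \<rho> s) * K0 s s')"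
    using visits_fixpoint[OF K1, of \<rho> s'] visits_fixpoint[OF K0, of \<rho> s']
    by (simp add: right_diff_distrib left_diff_distrib sum_subtractf)
qed

lemma eventually_contracting_perturb:
  assumes K0: "contracting_kernel K0 c"
  shows "eventually (\<lambda>y. contracting_kernel (\<lambda>s s'. K0 s s' + y * E s s') ((1 + c) / 2)) (at 0)"
proof -
  define B where "B = (\<Sum>s\<in>UNIV. \<Sum>s'\<in>UNIV. \<bar>E s s'\<bar>)"
  have B: "(\<Sum>s'\<in>UNIV. \<bar>E s s'\<bar>) \<le> B" for s
    unfolding B_def by (rule member_le_sum) (auto intro: sum_nonneg)
  have c: "0 \<le> c" "c < 1" "\<And>s. (\<Sum>s'\<in>UNIV. \<bar>K0 s s'\<bar>) \<le> c"
    using K0 by (auto simp: contracting_kernel_def)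
  have "contracting_kernel (\<lambda>s s'. K0 s s' + y * E s s') ((1 + c) / 2)"
    if small: "\<bar>y\<bar> * B < (1 - c) / 2" for y
  proof -
    have "(\<Sum>s'\<in>UNIV. \<bar>K0 s s' + y * E s s'\<bar>) \<le> (1 + c) / 2" for s
    proof -
      have "(\<Sum>s'\<in>UNIV. \<bar>K0 s s' + y * E s s'\<bar>) \<le> (\<Sum>s'\<in>UNIV. \<bar>K0 s s'\<bar> + \<bar>y\<bar> * \<bar>E s s'\<bar>)"
        by (intro sum_mono) (metis abs_mult abs_triangle_ineq)
      also have "\<dots> = (\<Sum>s'\<in>UNIV. \<bar>K0 s s'\<bar>) + \<bar>y\<bar> * (\<Sum>s'\<in>UNIV. \<bar>E s s'\<bar>)"
        by (simp add: sum.distrib sum_distrib_left)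
      also have "\<dots> \<le> c + \<bar>y\<bar> * B"
        using c(3)[of s] B[of s] by (intro add_mono mult_left_mono) auto
      finally show ?thesis
        using small by (simp add: field_simps)
    qed
    then show ?thesis
      using c by (auto simp: contracting_kernel_def)
  qed
  moreover have "((\<lambda>y. \<bar>y\<bar> * B) \<longlongrightarrow> 0) (at (0::real))"
    by (rule tendsto_eq_intros | simp)+
  then have "eventually (\<lambda>y. \<bar>y\<bar> * B < (1 - c) / 2) (at 0)"
    using c by (intro order_tendstoD(2)) auto
  ultimately show ?thesis
    by (auto elim: eventually_mono)
qed

lemma visits_perturb_l1_le:
  assumes K0: "contracting_kernel K0 c" and Ky: "contracting_kernel (\<lambda>s s'. K0 s s' + y * E s s') c'"
  shows "(1 - c) * (1 - c') * (\<Sum>s\<in>UNIV. \<bar>visits (\<lambda>s s'. K0 s s' + y * E s s') \<rho> s - visits K0 \<rho> s\<bar>)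
         \<le> \<bar>y\<bar> * (\<Sum>s\<in>UNIV. \<Sum>s'\<in>UNIV. \<bar>E s s'\<bar>) * (\<Sum>s\<in>UNIV. \<bar>\<rho> s\<bar>)"
proof -
  let ?v = "visits (\<lambda>s s'. K0 s s' + y * E s s') \<rho>"
  define B where "B = (\<Sum>s\<in>UNIV. \<Sum>s'\<in>UNIV. \<bar>E s s'\<bar>)"
  have B: "(\<Sum>s'\<in>UNIV. \<bar>E s s'\<bar>) \<le> B" "0 \<le> B" for s
    unfolding B_def by (auto intro: member_le_sum sum_nonneg)
  have c': "0 \<le> 1 - c'"
    using Ky by (simp add: contracting_kernel_def)
  have "(1 - c) * (\<Sum>s\<in>UNIV. \<bar>?v s - visits K0 \<rho> s\<bar>) \<le> (\<Sum>s'\<in>UNIV. \<bar>y * (\<Sum>s\<in>UNIV. ?v s * E s s')\<bar>)"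
    using visits_difference_l1_le[OF K0 Ky, of \<rho>] by (simp add: sum_distrib_left mult.left_commute)
  also have "\<dots> = \<bar>y\<bar> * (\<Sum>s'\<in>UNIV. \<bar>\<Sum>s\<in>UNIV. ?v s * E s s'\<bar>)"
    by (simp add: abs_mult flip: sum_distrib_left)
  also have "\<dots> \<le> \<bar>y\<bar> * (B * (\<Sum>s\<in>UNIV. \<bar>?v s\<bar>))"
    by (intro mult_left_mono l1_norm_kernel_mult_le B) simp
  finally have diff: "(1 - c) * (\<Sum>s\<in>UNIV. \<bar>?v s - visits K0 \<rho> s\<bar>) \<le> \<bar>y\<bar> * (B * (\<Sum>s\<in>UNIV. \<bar>?v s\<bar>))" .
  have "(1 - c') * (\<Sum>s\<in>UNIV. \<bar>?v s\<bar>) \<le> (\<Sum>s\<in>UNIV. \<bar>\<rho> s\<bar>)"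
    by (rule l1_le_of_fixpoint[OF Ky visits_fixpoint[OF Ky]])
  then have "\<bar>y\<bar> * B * ((1 - c') * (\<Sum>s\<in>UNIV. \<bar>?v s\<bar>)) \<le> \<bar>y\<bar> * B * (\<Sum>s\<in>UNIV. \<bar>\<rho> s\<bar>)"
    using B(2) by (intro mult_left_mono) auto
  moreover have "(1 - c') * ((1 - c) * (\<Sum>s\<in>UNIV. \<bar>?v s - visits K0 \<rho> s\<bar>))
      \<le> \<bar>y\<bar> * B * ((1 - c') * (\<Sum>s\<in>UNIV. \<bar>?v s\<bar>))"
    using mult_left_mono[OF diff c'] by (simp add: ac_simps)
  ultimately show ?thesis
    unfolding B_def by (simp add: ac_simps)
qed

lemma visits_perturb_tendsto:
  assumes K0: "contracting_kernel K0 c"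
  shows "((\<lambda>y. visits (\<lambda>s s'. K0 s s' + y * E s s') \<rho> s) \<longlongrightarrow> visits K0 \<rho> s) (at 0)"
proof -
  let ?v = "\<lambda>y. visits (\<lambda>s s'. K0 s s' + y * E s s') \<rho>"
  define c' where "c' = (1 + c) / 2"
  define C where "C = (\<Sum>s\<in>UNIV. \<Sum>s'\<in>UNIV. \<bar>E s s'\<bar>) * (\<Sum>s\<in>UNIV. \<bar>\<rho> s\<bar>) / ((1 - c) * (1 - c'))"
  have pos: "0 < (1 - c) * (1 - c')"
    using K0 by (simp add: contracting_kernel_def c'_def)
  have "\<bar>?v y s - visits K0 \<rho> s\<bar> \<le> C * \<bar>y\<bar>"
    if "contracting_kernel (\<lambda>s s'. K0 s s' + y * E s s') c'" for y
  proof -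
    have "\<bar>?v y s - visits K0 \<rho> s\<bar> \<le> (\<Sum>s\<in>UNIV. \<bar>?v y s - visits K0 \<rho> s\<bar>)"
      by (rule member_le_sum) auto
    also have "\<dots> \<le> C * \<bar>y\<bar>"
      using visits_perturb_l1_le[OF K0 that, of \<rho>] pos by (simp add: C_def field_simps)
    finally show ?thesis .
  qed
  then have "eventually (\<lambda>y. norm (?v y s - visits K0 \<rho> s) \<le> C * \<bar>y\<bar>) (at 0)"
    using eventually_contracting_perturb[OF K0, of E] by (auto simp: c'_def elim: eventually_mono)
  moreover have "((\<lambda>y. C * \<bar>y\<bar>) \<longlongrightarrow> 0) (at (0::real))"
    by (rule tendsto_eq_intros | simp)+
  ultimately have "((\<lambda>y. ?v y s - visits K0 \<rho> s) \<longlongrightarrow> 0) (at 0)"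
    by (rule Lim_null_comparison)
  then show ?thesis
    by (rule LIM_zero_cancel)
qed

lemma sum_visits_perturb_has_derivative:
  assumes K0: "contracting_kernel K0 c"
  shows "((\<lambda>y. \<Sum>s\<in>UNIV. visits (\<lambda>s s'. K0 s s' + y * E s s') \<rho> s * (R s + y * F s))
          has_real_derivative
          (\<Sum>s\<in>UNIV. visits K0 \<rho> s * (F s + (\<Sum>s'\<in>UNIV. E s s' * state_value K0 R s')))) (at 0)"
proof -
  let ?K = "\<lambda>y s s'. K0 s s' + y * E s s'"
  let ?f = "\<lambda>y. \<Sum>s\<in>UNIV. visits (?K y) \<rho> s * (R s + y * F s)"
  define h where "h s = F s + (\<Sum>s'\<in>UNIV. E s s' * state_value K0 R s')" for s
  have f0: "?f 0 = (\<Sum>s\<in>UNIV. visits K0 \<rho> s * R s)"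
    by simp
  have "(?f y - ?f 0) / (y - 0) = (\<Sum>s\<in>UNIV. visits (?K y) \<rho> s * h s)"
    if "y \<noteq> 0" and Ky: "contracting_kernel (?K y) ((1 + c) / 2)" for y
  proof -
    have "R s + y * F s - R s + (\<Sum>s'\<in>UNIV. (?K y s s' - K0 s s') * state_value K0 R s') = y * h s" for s
      by (simp add: h_def distrib_left sum_distrib_left mult.assoc)
    then have "?f y - ?f 0 = (\<Sum>s\<in>UNIV. visits (?K y) \<rho> s * (y * h s))"
      using sum_visits_difference[OF K0 Ky, of \<rho> "\<lambda>s. R s + y * F s" R] unfolding f0 by simp
    then show ?thesis
      using that(1) by (simp add: sum_distrib_left[symmetric] mult.left_commute)
  qed
  then have "eventually (\<lambda>y. (\<Sum>s\<in>UNIV. visits (?K y) \<rho> s * h s) = (?f y - ?f 0) / (y - 0)) (at 0)"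
    using eventually_contracting_perturb[OF K0, of E]
    by (auto simp: eventually_at_filter elim: eventually_mono)
  moreover have "((\<lambda>y. \<Sum>s\<in>UNIV. visits (?K y) \<rho> s * h s) \<longlongrightarrow> (\<Sum>s\<in>UNIV. visits K0 \<rho> s * h s)) (at 0)"
    by (intro tendsto_sum tendsto_mult_right visits_perturb_tendsto[OF K0])
  ultimately have "((\<lambda>y. (?f y - ?f 0) / (y - 0)) \<longlongrightarrow> (\<Sum>s\<in>UNIV. visits K0 \<rho> s * h s)) (at 0)"
    by (rule Lim_transform_eventually[rotated])
  then show ?thesis
    unfolding has_field_derivative_iff h_def .
qed

section \<open>The stopping game as a family of kernels\<close>

definition state_kernel :: "('n::finite \<Rightarrow> 'a set) \<Rightarrow> ('s::finite \<Rightarrow> ('n \<Rightarrow> 'a) \<Rightarrow> 's \<Rightarrow> real)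
    \<Rightarrow> ('n,'s,'a) profile \<Rightarrow> 's \<Rightarrow> 's \<Rightarrow> real" where
  "state_kernel A P pol s s' = (\<Sum>b\<in>joint_actions A. joint_prob pol s b * P s b s')"

definition state_reward :: "('n::finite \<Rightarrow> 'a set) \<Rightarrow> ('n \<Rightarrow> 's \<Rightarrow> ('n \<Rightarrow> 'a) \<Rightarrow> real) \<Rightarrow> 'n
    \<Rightarrow> ('n,'s,'a) profile \<Rightarrow> 's \<Rightarrow> real" where
  "state_reward A r i pol s = (\<Sum>b\<in>joint_actions A. joint_prob pol s b * r i s b)"

definition others_prob :: "('n::finite,'s,'a) profile \<Rightarrow> 'n \<Rightarrow> 's \<Rightarrow> ('n \<Rightarrow> 'a) \<Rightarrow> real" where
  "others_prob pol i s b = (\<Prod>j\<in>UNIV - {i}. pol j s (b j))"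

definition marginal_q :: "('n::finite \<Rightarrow> 'a set) \<Rightarrow> ('s::finite \<Rightarrow> ('n \<Rightarrow> 'a) \<Rightarrow> 's \<Rightarrow> real)
    \<Rightarrow> ('n \<Rightarrow> 's \<Rightarrow> ('n \<Rightarrow> 'a) \<Rightarrow> real) \<Rightarrow> ('n,'s,'a) profile \<Rightarrow> 'n \<Rightarrow> 's \<Rightarrow> 'a \<Rightarrow> real" where
  "marginal_q A P r pol i s a =
     (\<Sum>b\<in>{b\<in>joint_actions A. b i = a}. others_prob pol i s b *
        (r i s b + (\<Sum>s'\<in>UNIV. P s b s' * state_value (state_kernel A P pol) (state_reward A r i pol) s')))"

definition joint_prob_dir :: "('n::finite,'s,'a) profile \<Rightarrow> 'n \<Rightarrow> ('s \<Rightarrow> 'a \<Rightarrow> real) \<Rightarrow> 's \<Rightarrow> ('n \<Rightarrow> 'a) \<Rightarrow> real" where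
  "joint_prob_dir pol i q s b = q s (b i) * others_prob pol i s b"

definition perturb :: "('n,'s,'a) profile \<Rightarrow> 'n \<Rightarrow> ('s \<Rightarrow> 'a \<Rightarrow> real) \<Rightarrow> real \<Rightarrow> ('n,'s,'a) profile" where
  "perturb pol i q y = pol(i := (\<lambda>s a. pol i s a + y * q s a))"

lemma occ_eq_occupancy: "occ A P \<rho> pol t s = occupancy (state_kernel A P pol) \<rho> t s"
  by (induction t arbitrary: s) (simp_all add: state_kernel_def)

lemma visitation_eq_visits: "visitation A P \<rho> pol s = visits (state_kernel A P pol) \<rho> s"
  by (simp add: visitation_def visits_def occ_eq_occupancy)

lemma value_fn_eq_visits:
  assumes "contracting_kernel (state_kernel A P pol) c"
  shows "value_fn A P \<rho> r i pol = (\<Sum>s\<in>UNIV. visits (state_kernel A P pol) \<rho> s * state_reward A r i pol s)"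
  using summable_occupancy[OF assms]
  by (simp add: value_fn_def visits_def occ_eq_occupancy suminf_sum summable_mult2 suminf_mult2
      flip: state_reward_def)

lemma finite_joint_actions: "finite (joint_actions (A :: 'n::finite \<Rightarrow> 'a::finite set))"
  by (simp add: joint_actions_def finite_PiE)

lemma joint_actions_memD: "b \<in> joint_actions A \<Longrightarrow> b i \<in> A i"
  by (simp add: joint_actions_def PiE_iff)

lemma joint_actions_nonempty: "(\<And>i. A i \<noteq> {}) \<Longrightarrow> joint_actions A \<noteq> {}"
  by (simp add: joint_actions_def PiE_eq_empty_iff)

lemma joint_prob_nonneg:
  assumes "pol \<in> policy_set A" and "b \<in> joint_actions A"
  shows "0 \<le> joint_prob pol s b"
  unfolding joint_prob_def
proof (intro prod_nonneg)
  fix j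
  show "0 \<le> pol j s (b j)"
    using assms joint_actions_memD[of b A j] by (auto simp: policy_set_def policy_set_i_def)
qed

lemma sum_joint_prob:
  fixes A :: "'n::finite \<Rightarrow> 'a::finite set"
  assumes "pol \<in> policy_set A"
  shows "(\<Sum>b\<in>joint_actions A. joint_prob pol s b) = 1"
  using assms unfolding joint_prob_def joint_actions_def
  by (subst prod_sum_PiE[symmetric]) (auto simp: policy_set_def policy_set_i_def)

lemma state_kernel_nonneg:
  assumes "\<And>s b s'. b \<in> joint_actions A \<Longrightarrow> 0 \<le> P s b s'" and "pol \<in> policy_set A"
  shows "0 \<le> state_kernel A P pol s s'"
  unfolding state_kernel_def using assms joint_prob_nonneg by (auto intro!: sum_nonneg mult_nonneg_nonneg)

lemma contracting_state_kernel:
  fixes A :: "'n::finite \<Rightarrow> 'a::finite set" and P :: "'s::finite \<Rightarrow> ('n \<Rightarrow> 'a) \<Rightarrow> 's \<Rightarrow> real"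
  assumes A_ne: "\<And>i. A i \<noteq> {}"
    and P_nn: "\<And>s b s'. b \<in> joint_actions A \<Longrightarrow> 0 \<le> P s b s'"
    and zeta_pos: "0 < \<zeta>"
    and stop: "\<And>s b. b \<in> joint_actions A \<Longrightarrow> \<zeta> \<le> 1 - (\<Sum>s'\<in>UNIV. P s b s')"
    and pol: "pol \<in> policy_set A"
  shows "contracting_kernel (state_kernel A P pol) (1 - \<zeta>)"
proof -
  obtain b0 where "b0 \<in> joint_actions A"
    using joint_actions_nonempty[of A] A_ne by blast
  then have "\<zeta> \<le> 1"
    using stop[of b0 undefined] P_nn sum_nonneg[of UNIV "P undefined b0"] by force
  moreover have "(\<Sum>s'\<in>UNIV. \<bar>state_kernel A P pol s s'\<bar>) \<le> 1 - \<zeta>" for s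
  proof -
    have "(\<Sum>s'\<in>UNIV. \<bar>state_kernel A P pol s s'\<bar>) = (\<Sum>s'\<in>UNIV. state_kernel A P pol s s')"
      using state_kernel_nonneg[OF P_nn pol] by simp
    also have "\<dots> = (\<Sum>b\<in>joint_actions A. joint_prob pol s b * (\<Sum>s'\<in>UNIV. P s b s'))"
      by (simp add: state_kernel_def sum_distrib_left sum.swap[of _ UNIV])
    also have "\<dots> \<le> (\<Sum>b\<in>joint_actions A. joint_prob pol s b * (1 - \<zeta>))"
      using joint_prob_nonneg[OF pol] stop by (intro sum_mono mult_left_mono) (auto simp: algebra_simps)
    also have "\<dots> = 1 - \<zeta>"
      using sum_joint_prob[OF pol] by (simp flip: sum_distrib_right)
    finally show ?thesis .
  qed
  ultimately show ?thesis
    using zeta_pos by (simp add: contracting_kernel_def)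
qed

lemma perturb_zero [simp]: "perturb pol i q 0 = pol"
  by (simp add: perturb_def)

lemma joint_prob_eq_others_prob: "joint_prob pol s b = pol i s (b i) * others_prob pol i s b"
  unfolding joint_prob_def others_prob_def by (rule prod.remove) simp_all

lemma joint_prob_perturb:
  "joint_prob (perturb pol i q y) s b = joint_prob pol s b + y * joint_prob_dir pol i q s b"
proof -
  have "others_prob (perturb pol i q y) i s b = others_prob pol i s b"
    unfolding others_prob_def by (intro prod.cong) (auto simp: perturb_def)
  then show ?thesis
    by (simp add: joint_prob_eq_others_prob[of _ _ _ i] joint_prob_dir_def perturb_def algebra_simps)
qed

lemma state_kernel_perturb:
  "state_kernel A P (perturb pol i q y)
   = (\<lambda>s s'. state_kernel A P pol s s' + y * (\<Sum>b\<in>joint_actions A. joint_prob_dir pol i q s b * P s b s'))"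
  by (intro ext) (simp add: state_kernel_def joint_prob_perturb algebra_simps sum.distrib sum_distrib_left)

lemma state_reward_perturb:
  "state_reward A r i (perturb pol i q y)
   = (\<lambda>s. state_reward A r i pol s + y * (\<Sum>b\<in>joint_actions A. joint_prob_dir pol i q s b * r i s b))"
  by (intro ext) (simp add: state_reward_def joint_prob_perturb algebra_simps sum.distrib sum_distrib_left)

lemma sum_joint_actions_by_action:
  fixes A :: "'n::finite \<Rightarrow> 'a::finite set" and q :: "'a \<Rightarrow> 'b::semiring_0"
  shows "(\<Sum>b\<in>joint_actions A. q (b i) * X b) = (\<Sum>a\<in>A i. q a * (\<Sum>b\<in>{b\<in>joint_actions A. b i = a}. X b))"
proof -
  have "(\<Sum>b\<in>joint_actions A. q (b i) * X b)
      = (\<Sum>a\<in>A i. \<Sum>b\<in>{b\<in>joint_actions A. b i = a}. q (b i) * X b)"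
    by (rule sum.group[symmetric]) (auto simp: finite_joint_actions joint_actions_memD)
  also have "\<dots> = (\<Sum>a\<in>A i. q a * (\<Sum>b\<in>{b\<in>joint_actions A. b i = a}. X b))"
    by (auto simp: sum_distrib_left intro!: sum.cong)
  finally show ?thesis .
qed

lemma directional_gain_eq_marginal_q:
  fixes A :: "'n::finite \<Rightarrow> 'a::finite set" and P r pol i
  defines "W \<equiv> state_value (state_kernel A P pol) (state_reward A r i pol)"
  shows "(\<Sum>b\<in>joint_actions A. joint_prob_dir pol i q s b * r i s b)
       + (\<Sum>s'\<in>UNIV. (\<Sum>b\<in>joint_actions A. joint_prob_dir pol i q s b * P s b s') * W s')
       = (\<Sum>a\<in>A i. q s a * marginal_q A P r pol i s a)"
proof -
  have "(\<Sum>s'\<in>UNIV. (\<Sum>b\<in>joint_actions A. joint_prob_dir pol i q s b * P s b s') * W s')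
      = (\<Sum>b\<in>joint_actions A. joint_prob_dir pol i q s b * (\<Sum>s'\<in>UNIV. P s b s' * W s'))"
    by (simp add: sum_distrib_left sum_distrib_right mult.assoc sum.swap[of _ UNIV])
  then have "(\<Sum>b\<in>joint_actions A. joint_prob_dir pol i q s b * r i s b)
       + (\<Sum>s'\<in>UNIV. (\<Sum>b\<in>joint_actions A. joint_prob_dir pol i q s b * P s b s') * W s')
       = (\<Sum>b\<in>joint_actions A. q s (b i) * (others_prob pol i s b * (r i s b + (\<Sum>s'\<in>UNIV. P s b s' * W s'))))"
    by (simp add: joint_prob_dir_def algebra_simps sum.distrib)
  also have "\<dots> = (\<Sum>a\<in>A i. q s a * (\<Sum>b\<in>{b\<in>joint_actions A. b i = a}.
      others_prob pol i s b * (r i s b + (\<Sum>s'\<in>UNIV. P s b s' * W s'))))"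
    by (rule sum_joint_actions_by_action)
  finally show ?thesis
    unfolding marginal_q_def W_def .
qed

lemma value_fn_perturb_has_derivative:
  fixes A :: "'n::finite \<Rightarrow> 'a::finite set"
  assumes K0: "contracting_kernel (state_kernel A P pol) c"
  shows "((\<lambda>y. value_fn A P \<rho> r i (perturb pol i q y)) has_real_derivative
          (\<Sum>s\<in>UNIV. visits (state_kernel A P pol) \<rho> s * (\<Sum>a\<in>A i. q s a * marginal_q A P r pol i s a))) (at 0)"
proof -
  define E where "E s s' = (\<Sum>b\<in>joint_actions A. joint_prob_dir pol i q s b * P s b s')" for s s'
  define F where "F s = (\<Sum>b\<in>joint_actions A. joint_prob_dir pol i q s b * r i s b)" for s
  let ?K = "state_kernel A P pol" and ?R = "state_reward A r i pol"
  let ?g = "\<lambda>y. \<Sum>s\<in>UNIV. visits (\<lambda>s s'. ?K s s' + y * E s s') \<rho> s * (?R s + y * F s)"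
  have "value_fn A P \<rho> r i (perturb pol i q y) = ?g y"
    if "contracting_kernel (\<lambda>s s'. ?K s s' + y * E s s') ((1 + c) / 2)" for y
    using value_fn_eq_visits[of A P "perturb pol i q y"] that
    by (simp add: state_kernel_perturb state_reward_perturb E_def F_def)
  then have "eventually (\<lambda>y. value_fn A P \<rho> r i (perturb pol i q y) = ?g y) (at 0)"
    using eventually_contracting_perturb[OF K0, of E] by (auto elim: eventually_mono)
  moreover have "value_fn A P \<rho> r i (perturb pol i q 0) = ?g 0"
    using value_fn_eq_visits[OF K0] by simp
  moreover have "(?g has_real_derivative
      (\<Sum>s\<in>UNIV. visits ?K \<rho> s * (\<Sum>a\<in>A i. q s a * marginal_q A P r pol i s a))) (at 0)"
    using sum_visits_perturb_has_derivative[OF K0, of E \<rho> ?R F]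
    unfolding E_def F_def directional_gain_eq_marginal_q .
  ultimately show ?thesis
    by (subst has_field_derivative_cong_eventually)
qed

lemma value_fn_perturb_diff:
  fixes A :: "'n::finite \<Rightarrow> 'a::finite set"
  assumes K0: "contracting_kernel (state_kernel A P pol) c"
    and Ky: "contracting_kernel (state_kernel A P (perturb pol i q y)) c'"
  shows "value_fn A P \<rho> r i (perturb pol i q y) - value_fn A P \<rho> r i pol
       = y * (\<Sum>s\<in>UNIV. visits (state_kernel A P (perturb pol i q y)) \<rho> s *
                (\<Sum>a\<in>A i. q s a * marginal_q A P r pol i s a))"
proof -
  let ?W = "state_value (state_kernel A P pol) (state_reward A r i pol)"
  have "state_reward A r i (perturb pol i q y) s - state_reward A r i pol s
      + (\<Sum>s'\<in>UNIV. (state_kernel A P (perturb pol i q y) s s' - state_kernel A P pol s s') * ?W s')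
      = y * (\<Sum>a\<in>A i. q s a * marginal_q A P r pol i s a)" for s
    unfolding directional_gain_eq_marginal_q[symmetric] state_kernel_perturb state_reward_perturb
    by (simp add: algebra_simps sum_distrib_left)
  then show ?thesis
    using sum_visits_difference[OF K0 Ky, of \<rho> "state_reward A r i (perturb pol i q y)" "state_reward A r i pol"]
    by (simp add: value_fn_eq_visits[OF K0] value_fn_eq_visits[OF Ky] sum_distrib_left mult.left_commute)
qed

section \<open>The policy gradient and Nash policies\<close>

lemma marginal_q_outside_actions:
  assumes "a \<notin> A i"
  shows "marginal_q A P r pol i s a = 0"
proof -
  have "{b \<in> joint_actions A. b i = a} = {}"
    using assms by (auto dest: joint_actions_memD[of _ A i])
  then show ?thesis
    unfolding marginal_q_def by (simp only: sum.empty)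
qed

lemma grad_i_eq_marginal_q:
  fixes A :: "'n::finite \<Rightarrow> 'a::finite set"
  assumes K: "contracting_kernel (state_kernel A P pol) c"
  shows "grad_i A P \<rho> r pol i s0 a0 = visits (state_kernel A P pol) \<rho> s0 * marginal_q A P r pol i s0 a0"
proof -
  define q where "q s a = (if s = s0 \<and> a = a0 then 1 else 0 :: real)" for s a
  let ?f = "\<lambda>y. value_fn A P \<rho> r i (perturb pol i q y)"
  have dir: "(\<Sum>s\<in>UNIV. visits (state_kernel A P pol) \<rho> s * (\<Sum>a\<in>A i. q s a * marginal_q A P r pol i s a))
      = visits (state_kernel A P pol) \<rho> s0 * marginal_q A P r pol i s0 a0"
  proof -
    have "(\<Sum>a\<in>A i. q s0 a * marginal_q A P r pol i s0 a) = marginal_q A P r pol i s0 a0"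
    proof (cases "a0 \<in> A i")
      case True
      then show ?thesis
        by (subst sum_eq_single_term[of _ a0]) (auto simp: q_def)
    next
      case False
      then show ?thesis
        by (auto simp: q_def marginal_q_outside_actions intro!: sum.neutral)
    qed
    moreover have "(\<Sum>s\<in>UNIV. visits (state_kernel A P pol) \<rho> s * (\<Sum>a\<in>A i. q s a * marginal_q A P r pol i s a))
        = visits (state_kernel A P pol) \<rho> s0 * (\<Sum>a\<in>A i. q s0 a * marginal_q A P r pol i s0 a)"
      by (rule sum_eq_single_term) (auto simp: q_def)
    ultimately show ?thesis
      by simp
  qed
  have "pol(i := (pol i)(s0 := (pol i s0)(a0 := x))) = perturb pol i q (x - pol i s0 a0)" for x
    by (auto simp: perturb_def q_def fun_eq_iff)
  moreover have "((\<lambda>x. ?f (x - pol i s0 a0)) has_real_derivative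
      visits (state_kernel A P pol) \<rho> s0 * marginal_q A P r pol i s0 a0) (at (pol i s0 a0))"
    using DERIV_shift[of ?f _ "pol i s0 a0" "- pol i s0 a0"] value_fn_perturb_has_derivative[OF K, of \<rho> r i q]
    unfolding dir by simp
  ultimately show ?thesis
    unfolding grad_i_def by (simp add: DERIV_imp_deriv)
qed

lemma grad_inner_eq:
  fixes A :: "'n::finite \<Rightarrow> 'a::finite set"
  assumes "contracting_kernel (state_kernel A P pis) c"
  shows "grad_inner A P \<rho> r pis pol = (\<Sum>i\<in>UNIV. \<Sum>s\<in>UNIV. visits (state_kernel A P pis) \<rho> s *
           (\<Sum>a\<in>A i. (pol i s a - pis i s a) * marginal_q A P r pis i s a))"
  unfolding grad_inner_def grad_i_eq_marginal_q[OF assms] by (simp add: sum_distrib_left ac_simps)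

lemma grad_inner_single_state_deviation:
  fixes A :: "'n::finite \<Rightarrow> 'a::finite set"
  assumes "contracting_kernel (state_kernel A P pis) c"
  shows "grad_inner A P \<rho> r pis (pis(i := (pis i)(s0 := p s0)))
       = visits (state_kernel A P pis) \<rho> s0 * (\<Sum>a\<in>A i. (p s0 a - pis i s0 a) * marginal_q A P r pis i s0 a)"
proof -
  let ?pol = "pis(i := (pis i)(s0 := p s0))"
  let ?g = "\<lambda>j s. visits (state_kernel A P pis) \<rho> s * (\<Sum>a\<in>A j. (?pol j s a - pis j s a) * marginal_q A P r pis j s a)"
  have "(\<Sum>j\<in>UNIV. \<Sum>s\<in>UNIV. ?g j s) = (\<Sum>s\<in>UNIV. ?g i s)"
    by (rule sum_eq_single_term) auto
  also have "\<dots> = ?g i s0"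
    by (rule sum_eq_single_term) auto
  finally show ?thesis
    unfolding grad_inner_eq[OF assms] by simp
qed

lemma policy_set_i_convex:
  assumes "p \<in> policy_set_i A i" and "p' \<in> policy_set_i A i" and "0 \<le> h" and "h \<le> 1"
  shows "(\<lambda>s a. (1 - h) * p s a + h * p' s a) \<in> policy_set_i A i"
  using assms by (simp add: policy_set_i_def sum.distrib flip: sum_distrib_left)

lemma nash_imp_directional_deriv_nonpos:
  fixes A :: "'n::finite \<Rightarrow> 'a::finite set"
  assumes nash: "is_nash A P \<rho> r pis" and K: "contracting_kernel (state_kernel A P pis) c"
    and p: "p \<in> policy_set_i A i"
  shows "(\<Sum>s\<in>UNIV. visits (state_kernel A P pis) \<rho> s *
           (\<Sum>a\<in>A i. (p s a - pis i s a) * marginal_q A P r pis i s a)) \<le> 0"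
proof (rule DERIV_nonpos_if_right_max)
  let ?q = "\<lambda>s a. p s a - pis i s a"
  show "DERIV (\<lambda>y. value_fn A P \<rho> r i (perturb pis i ?q y)) 0 :>
      (\<Sum>s\<in>UNIV. visits (state_kernel A P pis) \<rho> s * (\<Sum>a\<in>A i. ?q s a * marginal_q A P r pis i s a))"
    by (rule value_fn_perturb_has_derivative[OF K])
  show "value_fn A P \<rho> r i (perturb pis i ?q (0 + h)) \<le> value_fn A P \<rho> r i (perturb pis i ?q 0)"
    if "0 < h" "h \<le> 1" for h
  proof -
    have "pis i \<in> policy_set_i A i"
      using nash by (simp add: is_nash_def policy_set_def)
    then have "(\<lambda>s a. (1 - h) * pis i s a + h * p s a) \<in> policy_set_i A i"
      using p that by (intro policy_set_i_convex) auto
    moreover have "perturb pis i ?q h = pis(i := (\<lambda>s a. (1 - h) * pis i s a + h * p s a))"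
      by (simp add: perturb_def algebra_simps)
    ultimately show ?thesis
      using nash by (simp add: is_nash_def)
  qed
qed simp

lemma gradient_cond_imp_best_response:
  fixes A :: "'n::finite \<Rightarrow> 'a::finite set"
  assumes K: "\<And>pol. pol \<in> policy_set A \<Longrightarrow> contracting_kernel (state_kernel A P pol) c"
    and P_nn: "\<And>s b s'. b \<in> joint_actions A \<Longrightarrow> 0 \<le> P s b s'"
    and rho_nn: "\<And>s. 0 \<le> \<rho> s"
    and mismatch: "\<forall>pol\<in>policy_set A. \<forall>pol'\<in>policy_set A. \<forall>s.
                     visitation A P \<rho> pol s \<le> M * visitation A P \<rho> pol' s"
    and pis: "pis \<in> policy_set A" and p: "p \<in> policy_set_i A i"
    and grad: "\<forall>pol\<in>policy_set A. grad_inner A P \<rho> r pis pol \<le> 0"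
  shows "value_fn A P \<rho> r i (pis(i := p)) \<le> value_fn A P \<rho> r i pis"
proof -
  let ?q = "\<lambda>s a. p s a - pis i s a"
  let ?v = "visits (state_kernel A P pis) \<rho>" and ?v' = "visits (state_kernel A P (pis(i := p))) \<rho>"
  define gain where "gain s = (\<Sum>a\<in>A i. ?q s a * marginal_q A P r pis i s a)" for s
  have dev: "pis(i := p) = perturb pis i ?q 1" and dev_pol: "pis(i := p) \<in> policy_set A"
    using pis p by (auto simp: perturb_def policy_set_def)
  have local_cond: "?v s * gain s \<le> 0" for s
  proof -
    have "pis(i := (pis i)(s := p s)) \<in> policy_set A"
      using pis p by (auto simp: policy_set_def policy_set_i_def)
    then show ?thesis
      using grad grad_inner_single_state_deviation[OF K[OF pis]] unfolding gain_def by auto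
  qed
  have "?v' s * gain s \<le> 0" for s
  proof (cases "?v s = 0")
    case True
    \<comment> \<open>The local condition is void where \<open>pis\<close> never goes; the mismatch bound keeps the
      deviation away from there too.\<close>
    have "0 \<le> ?v' s"
      using K[OF dev_pol] state_kernel_nonneg[OF P_nn dev_pol] rho_nn by (rule visits_nonneg)
    moreover have "?v' s \<le> 0"
      using mismatch[rule_format, OF dev_pol pis, of s] True by (simp add: visitation_eq_visits)
    ultimately show ?thesis
      by simp
  next
    case False
    then have "0 < ?v s"
      using visits_nonneg[OF K[OF pis] state_kernel_nonneg[OF P_nn pis] rho_nn] by (simp add: order_less_le)
    then show ?thesis
      using local_cond[of s] visits_nonneg[OF K[OF dev_pol] state_kernel_nonneg[OF P_nn dev_pol] rho_nn]
      by (simp add: mult_le_0_iff mult_nonneg_nonpos)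
  qed
  moreover have "value_fn A P \<rho> r i (pis(i := p)) - value_fn A P \<rho> r i pis = (\<Sum>s\<in>UNIV. ?v' s * gain s)"
    using value_fn_perturb_diff[OF K[OF pis], of i ?q 1] K[OF dev_pol] unfolding dev gain_def by simp
  ultimately show ?thesis
    using sum_nonpos[of UNIV "\<lambda>s. ?v' s * gain s"] by simp
qed

theorem lemma3:
  fixes A :: "'n::finite \<Rightarrow> 'a::finite set"
    and P :: "'s::finite \<Rightarrow> ('n \<Rightarrow> 'a) \<Rightarrow> 's \<Rightarrow> real"
    and \<rho> :: "'s \<Rightarrow> real"
    and r :: "'n \<Rightarrow> 's \<Rightarrow> ('n \<Rightarrow> 'a) \<Rightarrow> real"
    and \<zeta> :: real
    and pis :: "('n,'s,'a) profile"
  assumes A_ne: "\<And>i. A i \<noteq> {}"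
    and r_bd: "\<And>i s a. a \<in> joint_actions A \<Longrightarrow> \<bar>r i s a\<bar> \<le> 1"
    and P_nn: "\<And>s a s'. a \<in> joint_actions A \<Longrightarrow> 0 \<le> P s a s'"
    and zeta_pos: "0 < \<zeta>"
    and stop: "\<And>s a. a \<in> joint_actions A \<Longrightarrow> \<zeta> \<le> 1 - (\<Sum>s'\<in>UNIV. P s a s')"
    and rho_nn: "\<And>s. 0 \<le> \<rho> s"
    and rho_sum: "(\<Sum>s\<in>UNIV. \<rho> s) = 1"
    and mismatch: "\<exists>M. \<forall>pol\<in>policy_set A. \<forall>pol'\<in>policy_set A. \<forall>s.
                     visitation A P \<rho> pol s \<le> M * visitation A P \<rho> pol' s"
    and pis_pol: "pis \<in> policy_set A"
  shows "is_nash A P \<rho> r pis \<longleftrightarrow> (\<forall>pol\<in>policy_set A. grad_inner A P \<rho> r pis pol \<le> 0)"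
proof -
  have K: "contracting_kernel (state_kernel A P pol) (1 - \<zeta>)" if "pol \<in> policy_set A" for pol
    using A_ne P_nn zeta_pos stop that by (rule contracting_state_kernel)
  obtain M where M: "\<forall>pol\<in>policy_set A. \<forall>pol'\<in>policy_set A. \<forall>s.
      visitation A P \<rho> pol s \<le> M * visitation A P \<rho> pol' s"
    using mismatch by blast
  have "grad_inner A P \<rho> r pis pol \<le> 0"
    if nash: "is_nash A P \<rho> r pis" and pol: "pol \<in> policy_set A" for pol :: "('n,'s,'a) profile"
    unfolding grad_inner_eq[OF K[OF pis_pol]]
    using pol by (intro sum_nonpos nash_imp_directional_deriv_nonpos[OF nash K[OF pis_pol]])
      (simp add: policy_set_def)
  moreover have "is_nash A P \<rho> r pis" if "\<forall>pol\<in>policy_set A. grad_inner A P \<rho> r pis pol \<le> 0"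
    using gradient_cond_imp_best_response[OF K P_nn rho_nn M pis_pol _ that] pis_pol
    by (simp add: is_nash_def)
  ultimately show ?thesis
    by blast
qed

end
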